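(* Let $\mathcal F=(A,X,f)$ and $\mathcal G=(B,X,g)$ be fuzzy automata and let $\varphi:\mathcal F\to\mathcal G$ be an epimorphism. Then for each $i\in\{1,2,3\}$, $D_i(\mathcal F)\subseteq D_i(\mathcal G)$, and if $\mathcal F$ is D$i$-directable, then so is $\mathcal G$.
   Context: A fuzzy automaton is a triple $\mathcal F=(A,X,f)$ with $A$ a finite nonempty set of states, $X$ a finite nonempty alphabet, and $f:A\times X\times A\to[0,1]$, extended to words by $f^*(a,\varepsilon,a)=1$, $f^*(a,\varepsilon,b)=0$ ($b\neq a$), $f^*(a,vx,b)=\max_{c\in A}\min\{f^*(a,v,c),f(c,x,b)\}$. Let $\mathcal F(a,w)=\{b\in A\mid f^*(a,w,b)>0\}$. A word $w\in X^*$ is D1-directing for $\mathcal F$ if there is $c\in A$ with $\mathcal F(a,w)=\{c\}$ for all $a\in A$; D2-directing if $\mathcal F(a,w)=\mathcal F(b,w)$ for all $a,b\in A$; D3-directing if there is $c\in A$ with $c\in\mathcal F(a,w)$ for all $a\in A$. $D_i(\mathcal F)$ is the set of D$i$-directing words, and $\mathcal F$ is D$i$-directable if $D_i(\mathcal F)\neq\emptyset$. A mapping $\varphi:A\to B$ is a homomorphism $\mathcal F\to\mathcal G$ if $g(\varphi(a),x,b)=\max\{f(a,x,a')\mid a'\in A,\ \varphi(a')=b\}$ for all $a\in A$, $b\in B$, $x\in X$ (the maximum of the empty set being $0$); an epimorphism is a surjective homomorphism. *)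

theory Defs
  imports Complex_Main
begin

definition fuzzy_automaton :: "'a set \<Rightarrow> 'x set \<Rightarrow> ('a \<Rightarrow> 'x \<Rightarrow> 'a \<Rightarrow> real) \<Rightarrow> bool" where
  "fuzzy_automaton A X f \<longleftrightarrow> finite A \<and> A \<noteq> {} \<and> finite X \<and> X \<noteq> {} \<and>
     (\<forall>a\<in>A. \<forall>x\<in>X. \<forall>b\<in>A. 0 \<le> f a x b \<and> f a x b \<le> 1)"

text \<open>Extension to words, on the reversed word: fstar_rev A f a (rev w) b = f*(a,w,b).
  fstar_rev A f a (x # v) b corresponds to f*(a, rev v @ [x], b).\<close>
fun fstar_rev :: "'a set \<Rightarrow> ('a \<Rightarrow> 'x \<Rightarrow> 'a \<Rightarrow> real) \<Rightarrow> 'a \<Rightarrow> 'x list \<Rightarrow> 'a \<Rightarrow> real" where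
  "fstar_rev A f a [] b = (if a = b then 1 else 0)"
| "fstar_rev A f a (x # v) b = Max ((\<lambda>c. min (fstar_rev A f a v c) (f c x b)) ` A)"

definition fstar :: "'a set \<Rightarrow> ('a \<Rightarrow> 'x \<Rightarrow> 'a \<Rightarrow> real) \<Rightarrow> 'a \<Rightarrow> 'x list \<Rightarrow> 'a \<Rightarrow> real" where
  "fstar A f a w b = fstar_rev A f a (rev w) b"

definition reach :: "'a set \<Rightarrow> ('a \<Rightarrow> 'x \<Rightarrow> 'a \<Rightarrow> real) \<Rightarrow> 'a \<Rightarrow> 'x list \<Rightarrow> 'a set" where
  "reach A f a w = {b \<in> A. fstar A f a w b > 0}"

definition D1 :: "'a set \<Rightarrow> 'x set \<Rightarrow> ('a \<Rightarrow> 'x \<Rightarrow> 'a \<Rightarrow> real) \<Rightarrow> 'x list set" where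
  "D1 A X f = {w \<in> lists X. \<exists>c\<in>A. \<forall>a\<in>A. reach A f a w = {c}}"

definition D2 :: "'a set \<Rightarrow> 'x set \<Rightarrow> ('a \<Rightarrow> 'x \<Rightarrow> 'a \<Rightarrow> real) \<Rightarrow> 'x list set" where
  "D2 A X f = {w \<in> lists X. \<forall>a\<in>A. \<forall>b\<in>A. reach A f a w = reach A f b w}"

definition D3 :: "'a set \<Rightarrow> 'x set \<Rightarrow> ('a \<Rightarrow> 'x \<Rightarrow> 'a \<Rightarrow> real) \<Rightarrow> 'x list set" where
  "D3 A X f = {w \<in> lists X. \<exists>c\<in>A. \<forall>a\<in>A. c \<in> reach A f a w}"

definition Dset :: "nat \<Rightarrow> 'a set \<Rightarrow> 'x set \<Rightarrow> ('a \<Rightarrow> 'x \<Rightarrow> 'a \<Rightarrow> real) \<Rightarrow> 'x list set" where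
  "Dset i A X f = (if i = 1 then D1 A X f else if i = 2 then D2 A X f else D3 A X f)"

definition directable :: "nat \<Rightarrow> 'a set \<Rightarrow> 'x set \<Rightarrow> ('a \<Rightarrow> 'x \<Rightarrow> 'a \<Rightarrow> real) \<Rightarrow> bool" where
  "directable i A X f \<longleftrightarrow> Dset i A X f \<noteq> {}"

text \<open>Homomorphism phi : (A,X,f) -> (B,X,g); max of the empty set is 0.\<close>
definition fuzzy_hom :: "'a set \<Rightarrow> 'b set \<Rightarrow> 'x set \<Rightarrow> ('a \<Rightarrow> 'x \<Rightarrow> 'a \<Rightarrow> real)
    \<Rightarrow> ('b \<Rightarrow> 'x \<Rightarrow> 'b \<Rightarrow> real) \<Rightarrow> ('a \<Rightarrow> 'b) \<Rightarrow> bool" where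
  "fuzzy_hom A B X f g \<phi> \<longleftrightarrow> (\<forall>a\<in>A. \<phi> a \<in> B) \<and>
     (\<forall>a\<in>A. \<forall>b\<in>B. \<forall>x\<in>X. g (\<phi> a) x b =
        (let S = {f a x a' | a'. a' \<in> A \<and> \<phi> a' = b} in if S = {} then 0 else Max S))"

definition fuzzy_epi :: "'a set \<Rightarrow> 'b set \<Rightarrow> 'x set \<Rightarrow> ('a \<Rightarrow> 'x \<Rightarrow> 'a \<Rightarrow> real)
    \<Rightarrow> ('b \<Rightarrow> 'x \<Rightarrow> 'b \<Rightarrow> real) \<Rightarrow> ('a \<Rightarrow> 'b) \<Rightarrow> bool" where
  "fuzzy_epi A B X f g \<phi> \<longleftrightarrow> fuzzy_hom A B X f g \<phi> \<and> \<phi> ` A = B"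

end

theory Submission
  imports Defs
begin

text \<open>Only positivity matters for the sets \<open>F(a,w)\<close>, and an epimorphism preserves it exactly:
  \<open>g(\<phi> c, x, b) > 0\<close> iff \<open>f(c, x, a') > 0\<close> for some preimage \<open>a'\<close> of \<open>b\<close>. By induction on words,
  \<open>G(\<phi> a, w) = \<phi>(F(a, w))\<close>. Surjectivity of \<open>\<phi>\<close> then transports each of the three
  directing conditions from \<open>F\<close> to \<open>G\<close>, with the common target \<open>c\<close> replaced by \<open>\<phi> c\<close>.\<close>

lemma Max_min_image_pos_iff:
  fixes h k :: "'a \<Rightarrow> real"
  assumes "finite A" "A \<noteq> {}"
  shows "0 < Max ((\<lambda>c. min (h c) (k c)) ` A) \<longleftrightarrow> (\<exists>c\<in>A. 0 < h c \<and> 0 < k c)"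
  using assms by (simp add: Max_gr_iff min_less_iff_conj)

lemma fstar_rev_Cons_pos_iff:
  assumes "finite A" "A \<noteq> {}"
  shows "0 < fstar_rev A f a (x # v) b \<longleftrightarrow> (\<exists>c\<in>A. 0 < fstar_rev A f a v c \<and> 0 < f c x b)"
  using Max_min_image_pos_iff[OF assms] by simp

lemma fuzzy_hom_pos_iff:
  assumes hom: "fuzzy_hom A B X f g \<phi>" and "finite A" "c \<in> A" "b \<in> B" "x \<in> X"
  shows "0 < g (\<phi> c) x b \<longleftrightarrow> (\<exists>a'\<in>A. \<phi> a' = b \<and> 0 < f c x a')"
proof -
  let ?S = "{f c x a' | a'. a' \<in> A \<and> \<phi> a' = b}"
  have g_eq: "g (\<phi> c) x b = (if ?S = {} then 0 else Max ?S)"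
    using assms unfolding fuzzy_hom_def Let_def by blast
  have "finite ?S" using \<open>finite A\<close> by simp
  then show ?thesis
    using g_eq by (cases "?S = {}") (auto simp: Max_gr_iff)
qed

lemma fstar_rev_epi_pos_iff:
  assumes epi: "fuzzy_epi A B X f g \<phi>" and A: "finite A" "A \<noteq> {}" and "a \<in> A"
  shows "v \<in> lists X \<Longrightarrow> b \<in> B \<Longrightarrow>
    0 < fstar_rev B g (\<phi> a) v b \<longleftrightarrow> (\<exists>a'\<in>A. \<phi> a' = b \<and> 0 < fstar_rev A f a v a')"
proof (induction v arbitrary: b)
  case Nil
  then show ?case using \<open>a \<in> A\<close> by auto
next
  case (Cons x v)
  have hom: "fuzzy_hom A B X f g \<phi>" and surj: "\<phi> ` A = B"
    using epi by (auto simp: fuzzy_epi_def)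
  have B: "finite B" "B \<noteq> {}" using A surj by auto
  have x: "x \<in> X" and v: "v \<in> lists X" using Cons.prems by auto
  have "0 < fstar_rev B g (\<phi> a) (x # v) b \<longleftrightarrow>
        (\<exists>c\<in>B. 0 < fstar_rev B g (\<phi> a) v c \<and> 0 < g c x b)"
    using fstar_rev_Cons_pos_iff[OF B] .
  also have "\<dots> \<longleftrightarrow> (\<exists>c\<in>A. 0 < fstar_rev A f a v c \<and> 0 < g (\<phi> c) x b)"
    using Cons.IH[OF v] surj by (metis (no_types, lifting) image_iff)
  also have "\<dots> \<longleftrightarrow> (\<exists>a'\<in>A. \<phi> a' = b \<and> (\<exists>c\<in>A. 0 < fstar_rev A f a v c \<and> 0 < f c x a'))"
    using fuzzy_hom_pos_iff[OF hom A(1) _ Cons.prems(2) x] by blast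
  also have "\<dots> \<longleftrightarrow> (\<exists>a'\<in>A. \<phi> a' = b \<and> 0 < fstar_rev A f a (x # v) a')"
    by (simp only: fstar_rev_Cons_pos_iff[OF A])
  finally show ?case .
qed

lemma reach_epi_image:
  assumes epi: "fuzzy_epi A B X f g \<phi>" and "finite A" "A \<noteq> {}" "a \<in> A" "w \<in> lists X"
  shows "reach B g (\<phi> a) w = \<phi> ` reach A f a w"
proof -
  have surj: "\<phi> ` A = B" using epi by (auto simp: fuzzy_epi_def)
  have "rev w \<in> lists X" using \<open>w \<in> lists X\<close> by auto
  note pos_iff = fstar_rev_epi_pos_iff[OF assms(1-4) this]
  show ?thesis
  proof (intro equalityI subsetI)
    fix b assume "b \<in> reach B g (\<phi> a) w"
    then show "b \<in> \<phi> ` reach A f a w"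
      using pos_iff by (fastforce simp: reach_def fstar_def)
  next
    fix b assume "b \<in> \<phi> ` reach A f a w"
    then show "b \<in> reach B g (\<phi> a) w"
      using pos_iff surj by (fastforce simp: reach_def fstar_def)
  qed
qed

context
  fixes A :: "'a set" and B :: "'b set" and X :: "'x set"
    and f :: "'a \<Rightarrow> 'x \<Rightarrow> 'a \<Rightarrow> real" and g :: "'b \<Rightarrow> 'x \<Rightarrow> 'b \<Rightarrow> real"
    and \<phi> :: "'a \<Rightarrow> 'b"
  assumes epi: "fuzzy_epi A B X f g \<phi>" and finite: "finite A" and nonempty: "A \<noteq> {}"
begin

private lemma surj: "\<phi> ` A = B"
  using epi by (simp add: fuzzy_epi_def)

private lemmas reach_image = reach_epi_image[OF epi finite nonempty]

lemma D1_epi_subset: "D1 A X f \<subseteq> D1 B X g"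
proof
  fix w assume "w \<in> D1 A X f"
  then obtain c where w: "w \<in> lists X" and "c \<in> A" and target: "\<forall>a\<in>A. reach A f a w = {c}"
    unfolding D1_def by blast
  have "\<forall>a\<in>A. reach B g (\<phi> a) w = {\<phi> c}"
    using reach_image[OF _ w] target by simp
  then show "w \<in> D1 B X g"
    using w \<open>c \<in> A\<close> surj unfolding D1_def by blast
qed

lemma D2_epi_subset: "D2 A X f \<subseteq> D2 B X g"
proof
  fix w assume "w \<in> D2 A X f"
  then have w: "w \<in> lists X" and same: "\<forall>a\<in>A. \<forall>a'\<in>A. reach A f a w = reach A f a' w"
    unfolding D2_def by blast+
  have "reach B g (\<phi> a) w = reach B g (\<phi> a') w" if "a \<in> A" "a' \<in> A" for a a'
    using same that reach_image[OF that(1) w] reach_image[OF that(2) w] by metis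
  then show "w \<in> D2 B X g"
    using w surj unfolding D2_def by blast
qed

lemma D3_epi_subset: "D3 A X f \<subseteq> D3 B X g"
proof
  fix w assume "w \<in> D3 A X f"
  then obtain c where w: "w \<in> lists X" and "c \<in> A" and target: "\<forall>a\<in>A. c \<in> reach A f a w"
    unfolding D3_def by blast
  have "\<forall>a\<in>A. \<phi> c \<in> reach B g (\<phi> a) w"
    using reach_image[OF _ w] target by simp
  then show "w \<in> D3 B X g"
    using w \<open>c \<in> A\<close> surj unfolding D3_def by blast
qed

end

theorem proposition6p4:
  fixes A :: "'a set" and B :: "'b set" and X :: "'x set"
    and f :: "'a \<Rightarrow> 'x \<Rightarrow> 'a \<Rightarrow> real" and g :: "'b \<Rightarrow> 'x \<Rightarrow> 'b \<Rightarrow> real"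
    and \<phi> :: "'a \<Rightarrow> 'b"
  assumes "fuzzy_automaton A X f" and "fuzzy_automaton B X g"
    and "fuzzy_epi A B X f g \<phi>"
  shows "\<forall>i\<in>{1,2,3::nat}. Dset i A X f \<subseteq> Dset i B X g
           \<and> (directable i A X f \<longrightarrow> directable i B X g)"
proof -
  have "finite A" "A \<noteq> {}"
    using assms(1) by (auto simp: fuzzy_automaton_def)
  note D_epi_subset =
    D1_epi_subset[OF assms(3) this] D2_epi_subset[OF assms(3) this] D3_epi_subset[OF assms(3) this]
  then have "\<forall>i\<in>{1,2,3::nat}. Dset i A X f \<subseteq> Dset i B X g"
    unfolding Dset_def by simp
  then show ?thesis
    unfolding directable_def by blast
qed

end
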